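(* Let $\mathcal{M}=(M_i\colon i\in K)$ be a family of matroids on a common ground set $E$, let $\mathcal{F}=(\langle I_i,S_i\rangle\colon i\in K)$ be feasible with respect to $\mathcal{M}$, let $X$ be $\mathcal{M}(\mathcal{F})$-tight, and let $(R_i\colon i\in K)$ be a covering of $\mathcal{M}(\mathcal{F})\restriction X$. Then $\mathcal{F}'=(\langle I_i\cup R_i,S_i\rangle\colon i\in K)$ is a feasible extension of $\mathcal{F}$ with respect to $\mathcal{M}$, and $I_i\cup R_i$ spans $X\cap S_i$ in $M_i$ for every $i\in K$. Furthermore, if $X$ is the $\subseteq$-largest $\mathcal{M}(\mathcal{F})$-tight set, then there is no non-empty $\mathcal{M}(\mathcal{F}')$-tight set.
   Context: Matroids are possibly infinite (independence axioms: $\emptyset$ independent, closure under subsets, augmentation relative to maximal independent sets, and every independent subset of any $X\subseteq E$ extends to a maximal independent subset of $X$). Circuits are minimal dependent sets; $X$ spans $e$ if $e\in X$ or some circuit $C\ni e$ has $C\setminus\{e\}\subseteq X$; a set is spanning if it spans the whole ground set. Minors: $M\restriction X=(X,\mathcal{I}\cap\mathcal{P}(X))$, $M\setminus X=M\restriction(E\setminus X)$, $M^*$ is the matroid whose bases are the complements of bases of $M$, and $M/X=(M^*\setminus X)^*$. Declaring the elements of $X$ to be loops gives $M\setminus X\oplus(X,\{\emptyset\})$. For a family $(N_i\colon i\in K)$ on a set $Y$: a covering is $(R_i)$ with $R_i$ independent in $N_i$ and $\bigcup R_i=Y$; a packing is $(P_i)$ pairwise disjoint with $P_i$ spanning in $N_i$;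 the family is tight if it admits a covering and every covering has each $R_i$ spanning in $N_i$; $X\subseteq Y$ is tight (w.r.t. the family) if $(N_i\restriction X)$ is tight. Consider families $\mathcal{F}=(\langle I_i,S_i\rangle\colon i\in K)$ with $I_i\subseteq S_i\subseteq E$, $I_i$ independent and $S_i$ spanning in $M_i$, $I_i\cap I_j=\emptyset$ for $i\neq j$, and $\bigcup_i S_i=E$. $\mathcal{F}$ is covering-feasible if there is a covering $(R_i)$ of $\mathcal{M}$ with $I_i\subseteq R_i\subseteq S_i$, packing-feasible if there is a packing $(P_i)$ of $\mathcal{M}$ with $I_i\subseteq P_i\subseteq S_i$, and feasible if both. $\mathcal{F}'=(\langle I_i',S_i'\rangle)$ is an extension of $\mathcal{F}$ if $I_i\subseteq I_i'\subseteq S_i'\subseteq S_i$ for all $i$. $\mathcal{M}(\mathcal{F})=(M_i(\mathcal{F})\colon i\in K)$, where $M_i(\mathcal{F})$ is the matroid on $E\setminus\bigcup_{j\in K}I_j$ obtained from $M_i$ by contracting $I_i$, deleting $\bigcup_{j\neq i}I_j$, and declaring the remaining elements not in $S_i$ to be loops. *)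

theory Defs
  imports Main
begin

record 'a matroid =
  ground :: "'a set"
  indeps :: "'a set set"

definition indep :: "'a matroid \<Rightarrow> 'a set \<Rightarrow> bool" where
  "indep M I \<longleftrightarrow> I \<in> indeps M"

definition base :: "'a matroid \<Rightarrow> 'a set \<Rightarrow> bool" where
  "base M B \<longleftrightarrow> indep M B \<and> (\<forall>J. indep M J \<and> B \<subseteq> J \<longrightarrow> J = B)"

definition max_indep_in :: "'a matroid \<Rightarrow> 'a set \<Rightarrow> 'a set \<Rightarrow> bool" where
  "max_indep_in M X B \<longleftrightarrow> indep M B \<and> B \<subseteq> X \<and>
     (\<forall>J. indep M J \<and> B \<subseteq> J \<and> J \<subseteq> X \<longrightarrow> J = B)"

definition matroid :: "'a matroid \<Rightarrow> bool" where
  "matroid M \<longleftrightarrow>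
     (\<forall>I. indep M I \<longrightarrow> I \<subseteq> ground M) \<and>
     indep M {} \<and>
     (\<forall>I J. indep M J \<and> I \<subseteq> J \<longrightarrow> indep M I) \<and>
     (\<forall>I I'. indep M I \<and> \<not> base M I \<and> base M I' \<longrightarrow>
        (\<exists>x \<in> I' - I. indep M (insert x I))) \<and>
     (\<forall>X I. X \<subseteq> ground M \<and> indep M I \<and> I \<subseteq> X \<longrightarrow>
        (\<exists>B. I \<subseteq> B \<and> max_indep_in M X B))"

definition circuit :: "'a matroid \<Rightarrow> 'a set \<Rightarrow> bool" where
  "circuit M C \<longleftrightarrow> C \<subseteq> ground M \<and> \<not> indep M C \<and>
     (\<forall>D. D \<subset> C \<longrightarrow> indep M D)"

definition spans :: "'a matroid \<Rightarrow> 'a set \<Rightarrow> 'a \<Rightarrow> bool" where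
  "spans M X e \<longleftrightarrow> e \<in> X \<or> (\<exists>C. circuit M C \<and> e \<in> C \<and> C - {e} \<subseteq> X)"

definition spans_set :: "'a matroid \<Rightarrow> 'a set \<Rightarrow> 'a set \<Rightarrow> bool" where
  "spans_set M X Y \<longleftrightarrow> (\<forall>e \<in> Y. spans M X e)"

definition spanning :: "'a matroid \<Rightarrow> 'a set \<Rightarrow> bool" where
  "spanning M X \<longleftrightarrow> X \<subseteq> ground M \<and> spans_set M X (ground M)"

definition restrict :: "'a matroid \<Rightarrow> 'a set \<Rightarrow> 'a matroid" where
  "restrict M X = \<lparr> ground = X, indeps = {I \<in> indeps M. I \<subseteq> X} \<rparr>"

definition delete :: "'a matroid \<Rightarrow> 'a set \<Rightarrow> 'a matroid" where
  "delete M X = restrict M (ground M - X)"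

definition dual :: "'a matroid \<Rightarrow> 'a matroid" where
  "dual M = \<lparr> ground = ground M,
              indeps = {I. I \<subseteq> ground M \<and> (\<exists>B. base M B \<and> I \<subseteq> ground M - B)} \<rparr>"

definition contract :: "'a matroid \<Rightarrow> 'a set \<Rightarrow> 'a matroid" where
  "contract M X = dual (delete (dual M) X)"

text \<open>Direct sum of two matroids (used with disjoint ground sets).\<close>
definition direct_sum :: "'a matroid \<Rightarrow> 'a matroid \<Rightarrow> 'a matroid" where
  "direct_sum M N = \<lparr> ground = ground M \<union> ground N,
     indeps = {I \<union> J | I J. I \<in> indeps M \<and> J \<in> indeps N} \<rparr>"

definition make_loops :: "'a matroid \<Rightarrow> 'a set \<Rightarrow> 'a matroid" where
  "make_loops M X = direct_sum (delete M X) \<lparr> ground = X, indeps = {{}} \<rparr>"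

definition covering :: "('k \<Rightarrow> 'a matroid) \<Rightarrow> 'k set \<Rightarrow> 'a set \<Rightarrow> ('k \<Rightarrow> 'a set) \<Rightarrow> bool" where
  "covering N K Y R \<longleftrightarrow> (\<forall>i \<in> K. indep (N i) (R i)) \<and> (\<Union>i \<in> K. R i) = Y"

definition packing :: "('k \<Rightarrow> 'a matroid) \<Rightarrow> 'k set \<Rightarrow> 'a set \<Rightarrow> ('k \<Rightarrow> 'a set) \<Rightarrow> bool" where
  "packing N K Y P \<longleftrightarrow> (\<forall>i \<in> K. \<forall>j \<in> K. i \<noteq> j \<longrightarrow> P i \<inter> P j = {}) \<and>
     (\<forall>i \<in> K. spanning (N i) (P i))"

definition tight_family :: "('k \<Rightarrow> 'a matroid) \<Rightarrow> 'k set \<Rightarrow> 'a set \<Rightarrow> bool" where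
  "tight_family N K Y \<longleftrightarrow> (\<exists>R. covering N K Y R) \<and>
     (\<forall>R. covering N K Y R \<longrightarrow> (\<forall>i \<in> K. spanning (N i) (R i)))"

definition tight_set :: "('k \<Rightarrow> 'a matroid) \<Rightarrow> 'k set \<Rightarrow> 'a set \<Rightarrow> 'a set \<Rightarrow> bool" where
  "tight_set N K Y X \<longleftrightarrow> X \<subseteq> Y \<and> tight_family (\<lambda>i. restrict (N i) X) K X"

definition matroid_family :: "('k \<Rightarrow> 'a matroid) \<Rightarrow> 'k set \<Rightarrow> 'a set \<Rightarrow> bool" where
  "matroid_family M K E \<longleftrightarrow> (\<forall>i \<in> K. matroid (M i) \<and> ground (M i) = E)"

definition valid_pairs ::
  "('k \<Rightarrow> 'a matroid) \<Rightarrow> 'k set \<Rightarrow> 'a set \<Rightarrow> ('k \<Rightarrow> 'a set) \<Rightarrow> ('k \<Rightarrow> 'a set) \<Rightarrow> bool" where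
  "valid_pairs M K E I S \<longleftrightarrow>
     (\<forall>i \<in> K. I i \<subseteq> S i \<and> S i \<subseteq> E \<and> indep (M i) (I i) \<and> spanning (M i) (S i)) \<and>
     (\<forall>i \<in> K. \<forall>j \<in> K. i \<noteq> j \<longrightarrow> I i \<inter> I j = {}) \<and>
     (\<Union>i \<in> K. S i) = E"

definition covering_feasible ::
  "('k \<Rightarrow> 'a matroid) \<Rightarrow> 'k set \<Rightarrow> 'a set \<Rightarrow> ('k \<Rightarrow> 'a set) \<Rightarrow> ('k \<Rightarrow> 'a set) \<Rightarrow> bool" where
  "covering_feasible M K E I S \<longleftrightarrow>
     (\<exists>R. covering M K E R \<and> (\<forall>i \<in> K. I i \<subseteq> R i \<and> R i \<subseteq> S i))"

definition packing_feasible ::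
  "('k \<Rightarrow> 'a matroid) \<Rightarrow> 'k set \<Rightarrow> 'a set \<Rightarrow> ('k \<Rightarrow> 'a set) \<Rightarrow> ('k \<Rightarrow> 'a set) \<Rightarrow> bool" where
  "packing_feasible M K E I S \<longleftrightarrow>
     (\<exists>P. packing M K E P \<and> (\<forall>i \<in> K. I i \<subseteq> P i \<and> P i \<subseteq> S i))"

definition feasible ::
  "('k \<Rightarrow> 'a matroid) \<Rightarrow> 'k set \<Rightarrow> 'a set \<Rightarrow> ('k \<Rightarrow> 'a set) \<Rightarrow> ('k \<Rightarrow> 'a set) \<Rightarrow> bool" where
  "feasible M K E I S \<longleftrightarrow> covering_feasible M K E I S \<and> packing_feasible M K E I S"

definition extension ::
  "'k set \<Rightarrow> ('k \<Rightarrow> 'a set) \<Rightarrow> ('k \<Rightarrow> 'a set) \<Rightarrow> ('k \<Rightarrow> 'a set) \<Rightarrow> ('k \<Rightarrow> 'a set) \<Rightarrow> bool" where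
  "extension K I S I' S' \<longleftrightarrow> (\<forall>i \<in> K. I i \<subseteq> I' i \<and> I' i \<subseteq> S' i \<and> S' i \<subseteq> S i)"

definition rest_ground :: "'k set \<Rightarrow> 'a set \<Rightarrow> ('k \<Rightarrow> 'a set) \<Rightarrow> 'a set" where
  "rest_ground K E I = E - (\<Union>j \<in> K. I j)"

definition reduced_matroid ::
  "('k \<Rightarrow> 'a matroid) \<Rightarrow> 'k set \<Rightarrow> 'a set \<Rightarrow> ('k \<Rightarrow> 'a set) \<Rightarrow> ('k \<Rightarrow> 'a set) \<Rightarrow> 'k \<Rightarrow> 'a matroid" where
  "reduced_matroid M K E I S i =
     make_loops (delete (contract (M i) (I i)) (\<Union>j \<in> K - {i}. I j))
                (rest_ground K E I - S i)"

end

theory Submission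
  imports Defs
begin

text \<open>Everything about the reduced family \<open>M(F)\<close> is transferred back to the matroids \<open>M\<^sub>i\<close>: a set
  \<open>J\<close> is independent in \<open>M\<^sub>i(F)\<close> iff \<open>J \<subseteq> S\<^sub>i\<close> avoids every \<open>I\<^sub>j\<close> and \<open>J \<union> I\<^sub>i\<close> is independent in \<open>M\<^sub>i\<close>,
  and \<open>Q\<close> spans an element \<open>e \<in> S\<^sub>i\<close> in \<open>M\<^sub>i(F)\<restriction>Y\<close> iff \<open>Q \<union> I\<^sub>i\<close> spans \<open>e\<close> in \<open>M\<^sub>i\<close>. So tightness
  of \<open>X\<close> says: for every covering \<open>Q\<close> of \<open>M(F)\<restriction>X\<close>, each \<open>Q\<^sub>i \<union> I\<^sub>i\<close> spans \<open>X \<inter> S\<^sub>i\<close> in \<open>M\<^sub>i\<close>.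

  Hence the \<open>R\<^sub>i\<close> are disjoint, and inside any independent set of \<open>M\<^sub>i\<close> the part \<open>Q\<^sub>i \<union> I\<^sub>i\<close> coming
  from a covering of \<open>X\<close> may be replaced by \<open>I\<^sub>i \<union> R\<^sub>i\<close>, since replacing part of an independent set by
  an independent set that it spans preserves independence. Doing this in a covering of \<open>\<M>\<close> respecting
  \<open>F\<close>, and keeping a packing outside \<open>X\<close>, shows that \<open>F'\<close> is feasible. Finally, if \<open>Z\<close> is tight for
  \<open>M(F')\<close>, the same replacement shows that \<open>X \<union> Z\<close> is tight for \<open>M(F)\<close>; as \<open>Z\<close> avoids \<open>X\<close>, maximality
  of \<open>X\<close> forces \<open>Z = {}\<close>.\<close>

section \<open>Independence, bases and exchange\<close>

lemma indep_subset_ground: "matroid M \<Longrightarrow> indep M I \<Longrightarrow> I \<subseteq> ground M"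
  unfolding matroid_def by simp

lemma indep_empty: "matroid M \<Longrightarrow> indep M {}"
  unfolding matroid_def by simp

lemma indep_subset: "matroid M \<Longrightarrow> indep M J \<Longrightarrow> I \<subseteq> J \<Longrightarrow> indep M I"
  unfolding matroid_def by metis

lemma base_augment:
  "matroid M \<Longrightarrow> indep M I \<Longrightarrow> \<not> base M I \<Longrightarrow> base M B \<Longrightarrow> \<exists>x\<in>B - I. indep M (insert x I)"
  unfolding matroid_def by (elim conjE) simp

lemma max_indep_in_exists:
  "matroid M \<Longrightarrow> X \<subseteq> ground M \<Longrightarrow> indep M I \<Longrightarrow> I \<subseteq> X \<Longrightarrow> \<exists>B. I \<subseteq> B \<and> max_indep_in M X B"
  unfolding matroid_def by (elim conjE) simp

lemma max_indep_in_insert_dep: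
  "max_indep_in M X B \<Longrightarrow> x \<in> X \<Longrightarrow> x \<notin> B \<Longrightarrow> \<not> indep M (insert x B)"
  unfolding max_indep_in_def by blast

lemma base_exists:
  assumes M: "matroid M" and I: "indep M I"
  shows "\<exists>B. I \<subseteq> B \<and> base M B"
proof -
  obtain B where "I \<subseteq> B" and B: "max_indep_in M (ground M) B"
    using max_indep_in_exists[OF M order_refl I indep_subset_ground[OF M I]] by blast
  moreover have "base M B"
    using B indep_subset_ground[OF M] unfolding max_indep_in_def base_def by blast
  ultimately show ?thesis by blast
qed

lemma indep_iff_subset_base:
  assumes M: "matroid M"
  shows "indep M J \<longleftrightarrow> (\<exists>B. base M B \<and> J \<subseteq> B)"
proof
  assume "indep M J"
  then show "\<exists>B. base M B \<and> J \<subseteq> B" using base_exists[OF M] by blast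
next
  assume "\<exists>B. base M B \<and> J \<subseteq> B"
  then obtain B where "base M B" "J \<subseteq> B" by blast
  then show "indep M J" using indep_subset[OF M, of B J] unfolding base_def by blast
qed

lemma base_extend:
  assumes M: "matroid M" and B0: "base M B0" and J: "indep M J"
  shows "\<exists>B. J \<subseteq> B \<and> B \<subseteq> J \<union> B0 \<and> base M B"
proof -
  have "B0 \<subseteq> ground M" using B0 indep_subset_ground[OF M] unfolding base_def by blast
  then have "J \<union> B0 \<subseteq> ground M" using indep_subset_ground[OF M J] by blast
  then obtain B where JB: "J \<subseteq> B" and B: "max_indep_in M (J \<union> B0) B"
    using max_indep_in_exists[OF M _ J] by blast
  have "base M B"
  proof (rule ccontr)
    assume "\<not> base M B"
    moreover have "indep M B" using B unfolding max_indep_in_def by blast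
    ultimately obtain x where "x \<in> B0 - B" "indep M (insert x B)"
      using base_augment[OF M _ _ B0] by blast
    then show False using max_indep_in_insert_dep[OF B] by blast
  qed
  then show ?thesis using JB B unfolding max_indep_in_def by blast
qed

lemma base_exchange:
  assumes M: "matroid M" and B: "base M B" and B': "base M B'" and e: "e \<in> B - B'"
  shows "\<exists>x\<in>B' - B. indep M (insert x (B - {e}))"
proof -
  have "indep M (B - {e})" using B indep_subset[OF M, of B "B - {e}"] unfolding base_def by blast
  moreover have "\<not> base M (B - {e})" using B e unfolding base_def by blast
  ultimately obtain x where "x \<in> B' - (B - {e})" "indep M (insert x (B - {e}))"
    using base_augment[OF M _ _ B'] by blast
  then show ?thesis using e by blast
qed

text \<open>In closure terms: if \<open>A\<close> spans \<open>e\<close> and \<open>J\<close> does not, then \<open>J\<close> does not span all of \<open>A\<close>.\<close>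
lemma dep_insert_exchange:
  assumes M: "matroid M" and A: "indep M A" and Ae: "\<not> indep M (insert e A)"
    and J: "indep M (insert e J)" and e: "e \<notin> J"
  shows "\<exists>x\<in>A - J. indep M (insert x J)"
proof -
  obtain B where JB: "insert e J \<subseteq> B" and B: "base M B" using base_exists[OF M J] by blast
  obtain B2 where AB2: "A \<subseteq> B2" and B2: "B2 \<subseteq> A \<union> B" "base M B2"
    using base_extend[OF M B A] by blast
  have "e \<notin> B2"
  proof
    assume "e \<in> B2"
    then have "insert e A \<subseteq> B2" using AB2 by blast
    moreover have "indep M B2" using B2(2) unfolding base_def by blast
    ultimately show False using Ae indep_subset[OF M] by blast
  qed
  then obtain x where x: "x \<in> B2 - B" "indep M (insert x (B - {e}))"
    using base_exchange[OF M B B2(2)] JB by blast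
  have "insert x J \<subseteq> insert x (B - {e})" using JB e by blast
  then have "indep M (insert x J)" by (rule indep_subset[OF M x(2)])
  then show ?thesis using x(1) B2(1) JB by blast
qed

section \<open>Spanning\<close>

definition fundamental_circuit :: "'a matroid \<Rightarrow> 'a set \<Rightarrow> 'a \<Rightarrow> 'a set" where
  "fundamental_circuit M J e = insert e {f \<in> J. indep M (insert e (J - {f}))}"

lemma indep_Diff_fundamental_circuit:
  assumes M: "matroid M" and J: "indep M J" and g: "g \<in> fundamental_circuit M J e"
  shows "indep M (insert e J - {g})"
proof (cases "g = e")
  case True
  then have "insert e J - {g} \<subseteq> J" by blast
  then show ?thesis by (rule indep_subset[OF M J])
next
  case False
  then have "insert e J - {g} = insert e (J - {g})" by blast
  moreover have "indep M (insert e (J - {g}))"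
    using g False unfolding fundamental_circuit_def by blast
  ultimately show ?thesis by simp
qed

lemma circuit_fundamental_circuit:
  assumes M: "matroid M" and J: "indep M J" and e: "e \<in> ground M" and dep: "\<not> indep M (insert e J)"
  shows "circuit M (fundamental_circuit M J e)"
  unfolding circuit_def
proof (intro conjI allI impI)
  let ?C = "fundamental_circuit M J e"
  have C: "?C \<subseteq> insert e J" unfolding fundamental_circuit_def by blast
  have eJ: "insert e J \<subseteq> ground M" using e indep_subset_ground[OF M J] by blast
  then show "?C \<subseteq> ground M" using C by blast
  show "indep M D" if "D \<subset> ?C" for D
  proof -
    obtain g where g: "g \<in> ?C" "D \<subseteq> insert e J - {g}" using \<open>D \<subset> ?C\<close> C by blast
    show ?thesis using indep_subset[OF M indep_Diff_fundamental_circuit[OF M J g(1)] g(2)] .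
  qed
  show "\<not> indep M ?C"
  proof
    assume "indep M ?C"
    then obtain B where CB: "?C \<subseteq> B" and B: "max_indep_in M (insert e J) B"
      using max_indep_in_exists[OF M eJ _ C] by blast
    then have B_indep: "indep M B" and B_sub: "B \<subseteq> insert e J"
      unfolding max_indep_in_def by blast+
    have "e \<in> B" using CB unfolding fundamental_circuit_def by blast
    moreover have "B \<noteq> insert e J" using dep B_indep by blast
    ultimately obtain f where f: "f \<in> J" "f \<notin> B" using B_sub by blast
    have "\<not> indep M (insert f B)" using max_indep_in_insert_dep[OF B] f by blast
    moreover have "indep M (insert f (J - {f}))" using J f by (simp add: insert_absorb)
    ultimately obtain x where x: "x \<in> B - (J - {f})" "indep M (insert x (J - {f}))"
      using dep_insert_exchange[OF M B_indep, of f "J - {f}"] by blast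
    then have "x = e" using B_sub f by blast
    then have "f \<in> ?C" using x f unfolding fundamental_circuit_def by blast
    then show False using CB f by blast
  qed
qed

lemma spans_mono: "spans M A e \<Longrightarrow> A \<subseteq> A' \<Longrightarrow> spans M A' e"
  unfolding spans_def by blast

lemma spans_if_mem: "e \<in> A \<Longrightarrow> spans M A e"
  unfolding spans_def by blast

lemma spans_in_ground: "spans M A e \<Longrightarrow> A \<subseteq> ground M \<Longrightarrow> e \<in> ground M"
  unfolding spans_def circuit_def by blast

lemma spans_if_dep_insert:
  assumes M: "matroid M" and A: "indep M A" and e: "e \<in> ground M" and dep: "\<not> indep M (insert e A)"
  shows "spans M A e"
proof -
  have "circuit M (fundamental_circuit M A e)" by (rule circuit_fundamental_circuit[OF M A e dep])
  moreover have "fundamental_circuit M A e - {e} \<subseteq> A" unfolding fundamental_circuit_def by blast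
  ultimately show ?thesis unfolding spans_def fundamental_circuit_def by blast
qed

lemma dep_insert_if_spans:
  assumes M: "matroid M" and sp: "spans M A e" and AY: "A \<subseteq> Y" and e: "e \<notin> Y"
  shows "\<not> indep M (insert e Y)"
proof
  assume indep: "indep M (insert e Y)"
  obtain C where C: "circuit M C" "e \<in> C" "C - {e} \<subseteq> A" using sp AY e unfolding spans_def by blast
  then have "C \<subseteq> insert e Y" using AY by blast
  then have "indep M C" by (rule indep_subset[OF M indep])
  then show False using C(1) unfolding circuit_def by blast
qed

lemma spans_exchange:
  assumes M: "matroid M" and sp: "spans M A e" and J: "indep M (insert e J)" and e: "e \<notin> J"
  shows "\<exists>x\<in>A - J. indep M (insert x J)"
proof (cases "e \<in> A")
  case True
  then show ?thesis using J e by blast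
next
  case False
  then obtain C where C: "circuit M C" "e \<in> C" "C - {e} \<subseteq> A" using sp unfolding spans_def by blast
  have "indep M (C - {e})" using C(1,2) unfolding circuit_def by blast
  moreover have "\<not> indep M (insert e (C - {e}))"
    using C(1,2) unfolding circuit_def by (simp add: insert_absorb)
  ultimately obtain x where "x \<in> C - {e} - J" "indep M (insert x J)"
    using dep_insert_exchange[OF M _ _ J e] by blast
  then show ?thesis using C(3) by blast
qed

lemma spans_max_indep_in:
  assumes M: "matroid M" and J: "max_indep_in M Z J" and sp: "spans M Z e" and e: "e \<in> ground M"
  shows "spans M J e"
proof (rule ccontr)
  assume nsp: "\<not> spans M J e"
  then have eJ: "e \<notin> J" using spans_if_mem by metis
  have "indep M J" using J unfolding max_indep_in_def by blast
  then have "indep M (insert e J)" using spans_if_dep_insert[OF M _ e, of J] nsp by blast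
  then obtain x where "x \<in> Z - J" "indep M (insert x J)" using spans_exchange[OF M sp _ eJ] by blast
  then show False using max_indep_in_insert_dep[OF J, of x] by blast
qed

lemma spans_trans:
  assumes M: "matroid M" and Z: "Z \<subseteq> ground M" and YZ: "spans_set M Z Y" and sp: "spans M Y e"
  shows "spans M Z e"
proof (rule ccontr)
  assume nsp: "\<not> spans M Z e"
  obtain J where J: "max_indep_in M Z J" using max_indep_in_exists[OF M Z indep_empty[OF M]] by blast
  then have J_indep: "indep M J" and JZ: "J \<subseteq> Z" unfolding max_indep_in_def by blast+
  have Y_ground: "Y \<subseteq> ground M"
    using YZ spans_in_ground[OF _ Z] unfolding spans_set_def by blast
  have YJ: "spans M J y" if "y \<in> Y" for y
    using spans_max_indep_in[OF M J, of y] YZ Y_ground that unfolding spans_set_def by blast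
  have e: "e \<in> ground M" using spans_in_ground[OF sp Y_ground] .
  have eJ: "e \<notin> J" using nsp JZ spans_if_mem[of e Z M] by blast
  have "\<not> spans M J e" using nsp spans_mono[OF _ JZ] by blast
  then have "indep M (insert e J)" using spans_if_dep_insert[OF M J_indep e] by blast
  then obtain x where x: "x \<in> Y - J" "indep M (insert x J)" using spans_exchange[OF M sp _ eJ] by blast
  then have "spans M J x" using YJ by blast
  then show False using dep_insert_if_spans[OF M _ order_refl, of J x] x by blast
qed

lemma indep_Un_if_spans_set:
  assumes M: "matroid M" and A: "indep M A" and BT: "indep M (B \<union> T)" and disj: "B \<inter> T = {}"
    and sp: "spans_set M B A"
  shows "indep M (A \<union> T)"
proof (rule ccontr)
  assume dep: "\<not> indep M (A \<union> T)"
  have "A \<union> T \<subseteq> ground M" using indep_subset_ground[OF M A] indep_subset_ground[OF M BT] by blast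
  then obtain J where AJ: "A \<subseteq> J" and J: "max_indep_in M (A \<union> T) J"
    using max_indep_in_exists[OF M _ A] by blast
  then have J_indep: "indep M J" and J_sub: "J \<subseteq> A \<union> T" unfolding max_indep_in_def by blast+
  moreover have "J \<noteq> A \<union> T" using J_indep dep by blast
  ultimately obtain t where t: "t \<in> T" "t \<notin> J" using AJ by blast
  have "t \<in> ground M" using t(1) indep_subset_ground[OF M BT] by blast
  moreover have "\<not> indep M (insert t J)" using max_indep_in_insert_dep[OF J, of t] t by blast
  ultimately have "spans M J t" using spans_if_dep_insert[OF M J_indep] by blast
  moreover have "indep M (insert t (B \<union> T - {t}))" using BT t(1) by (simp add: insert_absorb)
  ultimately obtain x where x: "x \<in> J - (B \<union> T - {t})" "indep M (insert x (B \<union> T - {t}))"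
    using spans_exchange[OF M, of J t "B \<union> T - {t}"] by blast
  then have "x \<in> A - B" using J_sub t by blast
  then have "spans M B x" using sp unfolding spans_set_def by blast
  moreover have "B \<subseteq> B \<union> T - {t}" using disj t(1) by blast
  ultimately show False using dep_insert_if_spans[OF M, of B x "B \<union> T - {t}"] x by blast
qed

section \<open>Minors\<close>

lemma ground_restrict [simp]: "ground (restrict M X) = X"
  unfolding restrict_def by simp

lemma indep_restrict: "indep (restrict M X) J \<longleftrightarrow> indep M J \<and> J \<subseteq> X"
  unfolding indep_def restrict_def by simp

lemma ground_delete [simp]: "ground (delete M X) = ground M - X"
  unfolding delete_def by simp

lemma indep_delete: "indep (delete M X) J \<longleftrightarrow> indep M J \<and> J \<subseteq> ground M - X"
  unfolding delete_def by (simp add: indep_restrict)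

lemma ground_dual [simp]: "ground (dual M) = ground M"
  unfolding dual_def by simp

lemma indep_dual: "indep (dual M) J \<longleftrightarrow> J \<subseteq> ground M \<and> (\<exists>B. base M B \<and> J \<subseteq> ground M - B)"
  unfolding indep_def dual_def by simp

lemma ground_contract [simp]: "ground (contract M X) = ground M - X"
  unfolding contract_def by simp

lemma indep_make_loops: "indep (make_loops M X) J \<longleftrightarrow> indep (delete M X) J"
  unfolding make_loops_def direct_sum_def indep_def by simp

lemma base_delete_dual_iff:
  assumes M: "matroid M" and I: "indep M I"
  shows "base (delete (dual M) I) B \<longleftrightarrow> (\<exists>B0. base M B0 \<and> I \<subseteq> B0 \<and> B = ground M - B0)"
proof -
  let ?G = "ground M"
  have base_ground: "B0 \<subseteq> ?G" if "base M B0" for B0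
    using that indep_subset_ground[OF M] unfolding base_def by blast
  have indep_D: "indep (delete (dual M) I) J \<longleftrightarrow> J \<subseteq> ?G - I \<and> (\<exists>B0. base M B0 \<and> J \<inter> B0 = {})"
    for J unfolding indep_delete indep_dual by auto
  show ?thesis
  proof
    assume B: "base (delete (dual M) I) B"
    then have "indep (delete (dual M) I) B" unfolding base_def by blast
    then obtain B0 where BI: "B \<subseteq> ?G - I" and B0: "base M B0" "B \<inter> B0 = {}"
      unfolding indep_D by blast
    obtain B' where IB': "I \<subseteq> B'" and B': "B' \<subseteq> I \<union> B0" "base M B'"
      using base_extend[OF M B0(1) I] by blast
    have "B \<subseteq> ?G - B'" using BI B0(2) B'(1) by blast
    moreover have "indep (delete (dual M) I) (?G - B')" unfolding indep_D using B'(2) IB' by blast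
    ultimately have "B = ?G - B'" using B unfolding base_def by blast
    then show "\<exists>B0. base M B0 \<and> I \<subseteq> B0 \<and> B = ?G - B0" using B'(2) IB' by blast
  next
    assume "\<exists>B0. base M B0 \<and> I \<subseteq> B0 \<and> B = ?G - B0"
    then obtain B0 where B0: "base M B0" "I \<subseteq> B0" and B: "B = ?G - B0" by blast
    show "base (delete (dual M) I) B"
      unfolding base_def
    proof (intro conjI allI impI)
      show "indep (delete (dual M) I) B" unfolding indep_D B using B0 by blast
      fix J assume "indep (delete (dual M) I) J \<and> B \<subseteq> J"
      then obtain B1 where J: "J \<subseteq> ?G - I" "B \<subseteq> J" and B1: "base M B1" "J \<inter> B1 = {}"
        unfolding indep_D by blast
      then have "B1 \<subseteq> B0" using B base_ground by blast
      then have "B1 = B0" using B0(1) B1(1) unfolding base_def by blast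
      then show "J = B" using J B1 B by blast
    qed
  qed
qed

lemma indep_contract:
  assumes M: "matroid M" and I: "indep M I"
  shows "indep (contract M I) J \<longleftrightarrow> J \<subseteq> ground M - I \<and> indep M (J \<union> I)"
proof -
  have "indep (contract M I) J \<longleftrightarrow>
      J \<subseteq> ground M - I \<and> (\<exists>B0. base M B0 \<and> I \<subseteq> B0 \<and> J \<subseteq> (ground M - I) - (ground M - B0))"
    unfolding contract_def indep_dual base_delete_dual_iff[OF M I] by auto
  also have "\<dots> \<longleftrightarrow> J \<subseteq> ground M - I \<and> (\<exists>B0. base M B0 \<and> J \<union> I \<subseteq> B0)"
    by blast
  also have "\<dots> \<longleftrightarrow> J \<subseteq> ground M - I \<and> indep M (J \<union> I)"
    using indep_iff_subset_base[OF M] by blast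
  finally show ?thesis .
qed

text \<open>\<open>N\<close> is \<open>(M/I)\<restriction>Y\<close> with the elements outside \<open>S\<close> made loops, described by its independent sets
  only. It is not known to be a matroid, so spanning in \<open>N\<close> is analysed through its circuits.\<close>
locale contraction_with_loops =
  fixes M N :: "'a matroid" and I Y S :: "'a set"
  assumes M: "matroid M" and I: "indep M I"
    and N_ground: "ground N = Y"
    and N_indep: "\<And>J. indep N J \<longleftrightarrow> J \<subseteq> Y \<inter> S \<and> indep M (J \<union> I)"
    and Y_ground: "Y \<subseteq> ground M" and Y_Int_I: "Y \<inter> I = {}"
begin

lemma circuit_fundamental_circuit_Diff:
  assumes J: "indep M J" "I \<subseteq> J" "J - I \<subseteq> Y \<inter> S"
    and e: "e \<in> Y \<inter> S" "\<not> indep M (insert e J)"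
  shows "circuit N (fundamental_circuit M J e - I)"
  unfolding circuit_def
proof (intro conjI allI impI)
  let ?C = "fundamental_circuit M J e"
  have C_sub: "?C \<subseteq> insert e J" unfolding fundamental_circuit_def by blast
  then have CI_sub: "?C - I \<subseteq> Y \<inter> S" using J(3) e(1) by blast
  then show "?C - I \<subseteq> ground N" unfolding N_ground by blast
  have "circuit M ?C" using circuit_fundamental_circuit[OF M J(1) _ e(2)] e(1) Y_ground by blast
  then have "\<not> indep M ?C" unfolding circuit_def by blast
  then have "\<not> indep M ((?C - I) \<union> I)" using indep_subset[OF M, of "(?C - I) \<union> I" ?C] by blast
  then show "\<not> indep N (?C - I)" unfolding N_indep by blast
  fix D assume D: "D \<subset> ?C - I"
  then obtain g where g: "g \<in> ?C" "D \<union> I \<subseteq> insert e J - {g}" using C_sub J(2) by blast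
  then have "indep M (D \<union> I)"
    using indep_subset[OF M indep_Diff_fundamental_circuit[OF M J(1) g(1)] g(2)] by blast
  then show "indep N D" unfolding N_indep using D CI_sub by blast
qed

lemma spans_if_spans_contraction:
  assumes sp: "spans N A e" and A: "A \<subseteq> Y \<inter> S" and e: "e \<in> Y \<inter> S"
  shows "spans M (A \<union> I) e"
proof (cases "e \<in> A")
  case True
  then show ?thesis by (intro spans_if_mem) blast
next
  case False
  then obtain C where C: "circuit N C" "e \<in> C" "C - {e} \<subseteq> A" using sp unfolding spans_def by blast
  have C_ground: "C \<subseteq> Y" and C_dep: "\<not> indep N C" and "indep N (C - {e})"
    using C(1,2) N_ground unfolding circuit_def by auto
  then have C_indep: "indep M ((C - {e}) \<union> I)" unfolding N_indep by blast
  have "C \<subseteq> Y \<inter> S" using C_ground C(3) A e by blast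
  then have "\<not> indep M (C \<union> I)" using C_dep unfolding N_indep by blast
  moreover have "insert e ((C - {e}) \<union> I) = C \<union> I" using C(2) by blast
  ultimately have "\<not> indep M (insert e ((C - {e}) \<union> I))" by simp
  moreover have "e \<in> ground M" using e Y_ground by blast
  ultimately have "spans M ((C - {e}) \<union> I) e" using spans_if_dep_insert[OF M C_indep] by blast
  then show ?thesis by (rule spans_mono) (use C(3) in blast)
qed

lemma spans_contraction_if_spans:
  assumes sp: "e \<in> S \<longrightarrow> spans M (A \<union> I) e" and A: "A \<subseteq> Y \<inter> S" and e: "e \<in> Y"
  shows "spans N A e"
proof (cases "e \<in> S")
  case False
  have "indep N D" if "D \<subset> {e}" for D
  proof -
    have "D = {}" using that by blast
    then show ?thesis using I unfolding N_indep by simp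
  qed
  then have "circuit N {e}" using False e unfolding circuit_def N_ground N_indep by blast
  then show ?thesis unfolding spans_def by blast
next
  case eS: True
  show ?thesis
  proof (cases "e \<in> A")
    case True
    then show ?thesis by (rule spans_if_mem)
  next
    case eA: False
    have "A \<union> I \<subseteq> ground M" using A Y_ground indep_subset_ground[OF M I] by blast
    then obtain J where IJ: "I \<subseteq> J" and J: "max_indep_in M (A \<union> I) J"
      using max_indep_in_exists[OF M _ I] by blast
    then have J_indep: "indep M J" and J_sub: "J \<subseteq> A \<union> I" unfolding max_indep_in_def by blast+
    have eJ: "e \<notin> J" using J_sub eA e Y_Int_I by blast
    have "e \<in> ground M" using e Y_ground by blast
    then have "spans M J e" using spans_max_indep_in[OF M J, of e] sp eS by blast
    then have "\<not> indep M (insert e J)" using dep_insert_if_spans[OF M _ order_refl eJ] by blast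
    then have "circuit N (fundamental_circuit M J e - I)"
      using circuit_fundamental_circuit_Diff[OF J_indep IJ] J_sub A e eS by blast
    moreover have "e \<in> fundamental_circuit M J e - I"
      using e Y_Int_I unfolding fundamental_circuit_def by blast
    moreover have "fundamental_circuit M J e - I - {e} \<subseteq> A"
      using J_sub unfolding fundamental_circuit_def by blast
    ultimately show ?thesis unfolding spans_def by blast
  qed
qed

lemma spans_contraction_iff:
  assumes "A \<subseteq> Y \<inter> S" and "e \<in> Y"
  shows "spans N A e \<longleftrightarrow> (e \<in> S \<longrightarrow> spans M (A \<union> I) e)"
  using spans_if_spans_contraction[OF _ assms(1)] spans_contraction_if_spans[OF _ assms] assms(2)
  by blast

end

section \<open>Tight families and the reduced family \<open>M(F)\<close>\<close>

text \<open>Dropping a common element \<open>x\<close> of \<open>R i\<close> and \<open>R j\<close> from \<open>R j\<close> leaves a covering, so by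
  tightness \<open>R j - {x}\<close> still spans \<open>x\<close> and \<open>R j\<close> contains a circuit.\<close>
lemma tight_family_covering_disjoint:
  assumes tight: "tight_family N K Y" and cov: "covering N K Y R"
    and ground: "\<forall>i\<in>K. ground (N i) = Y"
    and indep_closed: "\<And>i J J'. i \<in> K \<Longrightarrow> indep (N i) J \<Longrightarrow> J' \<subseteq> J \<Longrightarrow> indep (N i) J'"
    and i: "i \<in> K" and j: "j \<in> K" and ij: "i \<noteq> j"
  shows "R i \<inter> R j = {}"
proof (rule ccontr)
  assume "R i \<inter> R j \<noteq> {}"
  then obtain x where x: "x \<in> R i" "x \<in> R j" by blast
  have R_indep: "indep (N k) (R k)" if "k \<in> K" for k using cov that unfolding covering_def by blast
  have R_Union: "(\<Union>k\<in>K. R k) = Y" using cov unfolding covering_def by blast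
  let ?Q = "R(j := R j - {x})"
  have "covering N K Y ?Q"
    unfolding covering_def
  proof
    show "\<forall>k\<in>K. indep (N k) (?Q k)"
      using R_indep indep_closed[OF j R_indep[OF j], of "R j - {x}"] by simp
    have "x \<in> ?Q i" using x(1) ij by simp
    then show "(\<Union>k\<in>K. ?Q k) = Y" using R_Union i by (auto split: if_splits)
  qed
  then have "spanning (N j) (R j - {x})" using tight j unfolding tight_family_def by (metis fun_upd_same)
  moreover have "x \<in> ground (N j)" using x(2) j ground R_Union by blast
  ultimately obtain C where C: "circuit (N j) C" "x \<in> C" "C - {x} \<subseteq> R j - {x}"
    unfolding spanning_def spans_set_def spans_def by blast
  then have "C \<subseteq> R j" using x(2) by blast
  then have "indep (N j) C" by (rule indep_closed[OF j R_indep[OF j]])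
  then show False using C(1) unfolding circuit_def by blast
qed

lemma matroid_familyD:
  "matroid_family M K E \<Longrightarrow> i \<in> K \<Longrightarrow> matroid (M i)"
  "matroid_family M K E \<Longrightarrow> i \<in> K \<Longrightarrow> ground (M i) = E"
  unfolding matroid_family_def by blast+

lemma indep_reduced_matroid:
  assumes fam: "matroid_family M K E" and i: "i \<in> K" and I: "indep (M i) (I i)"
  shows "indep (reduced_matroid M K E I S i) J \<longleftrightarrow>
    J \<subseteq> rest_ground K E I \<inter> S i \<and> indep (M i) (J \<union> I i)"
proof -
  let ?R = "rest_ground K E I"
  have R: "(E - I i) - (\<Union>j \<in> K - {i}. I j) = ?R" unfolding rest_ground_def using i by blast
  have "indep (reduced_matroid M K E I S i) J \<longleftrightarrow>
      ((J \<subseteq> E - I i \<and> indep (M i) (J \<union> I i)) \<and> J \<subseteq> ?R) \<and> J \<subseteq> ?R - (?R - S i)"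
    unfolding reduced_matroid_def indep_make_loops indep_delete ground_delete ground_contract
      indep_contract[OF matroid_familyD(1)[OF fam i] I] matroid_familyD(2)[OF fam i] R ..
  also have "\<dots> \<longleftrightarrow> J \<subseteq> ?R \<inter> S i \<and> indep (M i) (J \<union> I i)"
    using R by blast
  finally show ?thesis .
qed

lemma indep_restrict_reduced_matroid:
  assumes "matroid_family M K E" and "i \<in> K" and "indep (M i) (I i)" and "Y \<subseteq> rest_ground K E I"
  shows "indep (restrict (reduced_matroid M K E I S i) Y) J \<longleftrightarrow> J \<subseteq> Y \<inter> S i \<and> indep (M i) (J \<union> I i)"
  using assms(4) unfolding indep_restrict indep_reduced_matroid[of M K E i I S, OF assms(1-3)] by blast

lemma spans_restrict_reduced_matroid:
  assumes fam: "matroid_family M K E" and i: "i \<in> K" and I: "indep (M i) (I i)"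
    and Y: "Y \<subseteq> rest_ground K E I" and A: "A \<subseteq> Y \<inter> S i" and e: "e \<in> Y"
  shows "spans (restrict (reduced_matroid M K E I S i) Y) A e \<longleftrightarrow>
    (e \<in> S i \<longrightarrow> spans (M i) (A \<union> I i) e)"
proof -
  interpret contraction_with_loops "M i" "restrict (reduced_matroid M K E I S i) Y" "I i" Y "S i"
  proof
    show "indep (restrict (reduced_matroid M K E I S i) Y) J \<longleftrightarrow> J \<subseteq> Y \<inter> S i \<and> indep (M i) (J \<union> I i)"
      for J by (rule indep_restrict_reduced_matroid[of M K E i I Y S, OF fam i I Y])
    show "Y \<subseteq> ground (M i)" "Y \<inter> I i = {}"
      using Y i matroid_familyD(2)[OF fam i] unfolding rest_ground_def by blast+
  qed (simp_all add: matroid_familyD(1)[OF fam i] I)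
  show ?thesis by (rule spans_contraction_iff[OF A e])
qed

lemma spanning_restrict_reduced_matroid:
  assumes fam: "matroid_family M K E" and i: "i \<in> K" and I: "indep (M i) (I i)"
    and Y: "Y \<subseteq> rest_ground K E I" and Q: "Q \<subseteq> Y \<inter> S i"
  shows "spanning (restrict (reduced_matroid M K E I S i) Y) Q \<longleftrightarrow> spans_set (M i) (Q \<union> I i) (Y \<inter> S i)"
  using Q spans_restrict_reduced_matroid[of M K E i I Y Q S, OF fam i I Y Q]
  unfolding spanning_def spans_set_def by auto

lemma covering_restrict_reduced_matroid:
  assumes fam: "matroid_family M K E" and I: "\<forall>i\<in>K. indep (M i) (I i)"
    and Y: "Y \<subseteq> rest_ground K E I"
  shows "covering (\<lambda>i. restrict (reduced_matroid M K E I S i) Y) K Y Q \<longleftrightarrow>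
    (\<forall>i\<in>K. Q i \<subseteq> Y \<inter> S i \<and> indep (M i) (Q i \<union> I i)) \<and> (\<Union>i\<in>K. Q i) = Y"
proof -
  have "indep (restrict (reduced_matroid M K E I S i) Y) (Q i) \<longleftrightarrow>
      Q i \<subseteq> Y \<inter> S i \<and> indep (M i) (Q i \<union> I i)" if "i \<in> K" for i
    by (rule indep_restrict_reduced_matroid[of M K E i I Y S, OF fam that bspec[OF I that] Y])
  then show ?thesis unfolding covering_def by simp
qed

lemma covering_restrict_reduced_matroid_Int:
  assumes fam: "matroid_family M K E" and I: "\<forall>i\<in>K. indep (M i) (I i)"
    and Y: "Y \<subseteq> rest_ground K E I"
    and C: "\<forall>i\<in>K. C i \<subseteq> S i \<and> indep (M i) (C i \<union> I i)" and Y_sub: "Y \<subseteq> (\<Union>i\<in>K. C i)"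
  shows "covering (\<lambda>i. restrict (reduced_matroid M K E I S i) Y) K Y (\<lambda>i. C i \<inter> Y)"
  unfolding covering_restrict_reduced_matroid[OF fam I Y]
proof (intro conjI ballI)
  fix i assume i: "i \<in> K"
  show "C i \<inter> Y \<subseteq> Y \<inter> S i" using C i by blast
  have "indep (M i) (C i \<union> I i)" using C i by blast
  then show "indep (M i) (C i \<inter> Y \<union> I i)" by (rule indep_subset[OF matroid_familyD(1)[OF fam i]]) blast
next
  show "(\<Union>i\<in>K. C i \<inter> Y) = Y" using Y_sub by blast
qed

lemma tight_set_reduced_matroid_iff:
  assumes fam: "matroid_family M K E" and I: "\<forall>i\<in>K. indep (M i) (I i)"
  shows "tight_set (reduced_matroid M K E I S) K (rest_ground K E I) Y \<longleftrightarrow>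
    Y \<subseteq> rest_ground K E I \<and> (\<exists>Q. covering (\<lambda>i. restrict (reduced_matroid M K E I S i) Y) K Y Q) \<and>
    (\<forall>Q. covering (\<lambda>i. restrict (reduced_matroid M K E I S i) Y) K Y Q \<longrightarrow>
      (\<forall>i\<in>K. spans_set (M i) (Q i \<union> I i) (Y \<inter> S i)))"
proof -
  have "spanning (restrict (reduced_matroid M K E I S i) Y) (Q i) \<longleftrightarrow>
      spans_set (M i) (Q i \<union> I i) (Y \<inter> S i)"
    if Y: "Y \<subseteq> rest_ground K E I" and Q: "covering (\<lambda>i. restrict (reduced_matroid M K E I S i) Y) K Y Q"
      and i: "i \<in> K" for Q i
  proof (rule spanning_restrict_reduced_matroid[of M K E i I Y "Q i" S, OF fam i bspec[OF I i] Y])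
    show "Q i \<subseteq> Y \<inter> S i" using Q i unfolding covering_restrict_reduced_matroid[OF fam I Y] by blast
  qed
  then show ?thesis unfolding tight_set_def tight_family_def by blast
qed

section \<open>Extending \<open>F\<close> by a covering of a tight set\<close>

locale covered_tight_set =
  fixes M :: "'k \<Rightarrow> 'a matroid" and K :: "'k set" and E :: "'a set"
    and I S R :: "'k \<Rightarrow> 'a set" and X :: "'a set"
  assumes fam: "matroid_family M K E"
    and valid: "valid_pairs M K E I S"
    and tight: "tight_set (reduced_matroid M K E I S) K (rest_ground K E I) X"
    and cov: "covering (\<lambda>i. restrict (reduced_matroid M K E I S i) X) K X R"
begin

lemma M_matroid: "i \<in> K \<Longrightarrow> matroid (M i)"
  using matroid_familyD(1)[OF fam] .

lemma I_indep: "\<forall>i\<in>K. indep (M i) (I i)"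
  using valid unfolding valid_pairs_def by blast

lemma I_subset_S: "i \<in> K \<Longrightarrow> I i \<subseteq> S i"
  using valid unfolding valid_pairs_def by blast

lemma S_subset_E: "i \<in> K \<Longrightarrow> S i \<subseteq> E"
  using valid unfolding valid_pairs_def by blast

lemma X_subset_rest_ground: "X \<subseteq> rest_ground K E I"
  using tight unfolding tight_set_def by blast

lemma rest_ground_Int_I: "i \<in> K \<Longrightarrow> rest_ground K E I \<inter> I i = {}"
  unfolding rest_ground_def by blast

lemma R_subset: "i \<in> K \<Longrightarrow> R i \<subseteq> X \<inter> S i"
  using cov unfolding covering_restrict_reduced_matroid[OF fam I_indep X_subset_rest_ground] by blast

lemma I_Un_R_indep: "\<forall>i\<in>K. indep (M i) (I i \<union> R i)"
  using cov unfolding covering_restrict_reduced_matroid[OF fam I_indep X_subset_rest_ground]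
  by (simp add: Un_commute)

lemma R_Union: "(\<Union>i\<in>K. R i) = X"
  using cov unfolding covering_def by blast

lemma R_disjoint:
  assumes "i \<in> K" "j \<in> K" "i \<noteq> j"
  shows "R i \<inter> R j = {}"
proof (rule tight_family_covering_disjoint[OF _ cov _ _ assms])
  show "tight_family (\<lambda>i. restrict (reduced_matroid M K E I S i) X) K X"
    using tight unfolding tight_set_def by blast
  show "\<forall>i\<in>K. ground (restrict (reduced_matroid M K E I S i) X) = X" by simp
  fix i J J' assume i: "i \<in> K" and "indep (restrict (reduced_matroid M K E I S i) X) J" "J' \<subseteq> J"
  then show "indep (restrict (reduced_matroid M K E I S i) X) J'"
    using indep_subset[OF M_matroid[OF i], of "J \<union> I i" "J' \<union> I i"]
    unfolding indep_restrict_reduced_matroid[of M K E i I X S, OF fam i bspec[OF I_indep i] X_subset_rest_ground]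
    by blast
qed

lemma spans_set_covering:
  assumes "covering (\<lambda>i. restrict (reduced_matroid M K E I S i) X) K X Q" and "i \<in> K"
  shows "spans_set (M i) (Q i \<union> I i) (X \<inter> S i)"
  using tight assms unfolding tight_set_reduced_matroid_iff[OF fam I_indep] by blast

lemma spans_set_I_Un_R: "i \<in> K \<Longrightarrow> spans_set (M i) (I i \<union> R i) (X \<inter> S i)"
  using spans_set_covering[OF cov] by (simp add: Un_commute)

lemma indep_swap_covering:
  assumes Q: "covering (\<lambda>i. restrict (reduced_matroid M K E I S i) X) K X Q" and i: "i \<in> K"
    and indep: "indep (M i) (Q i \<union> I i \<union> T)" and T: "T \<inter> (X \<union> I i) = {}"
  shows "indep (M i) (I i \<union> R i \<union> T)"
proof (rule indep_Un_if_spans_set[OF M_matroid[OF i] bspec[OF I_Un_R_indep i] indep])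
  show "(Q i \<union> I i) \<inter> T = {}"
    using Q i T unfolding covering_restrict_reduced_matroid[OF fam I_indep X_subset_rest_ground] by blast
  show "spans_set (M i) (Q i \<union> I i) (I i \<union> R i)"
    using spans_set_covering[OF Q i] R_subset[OF i] spans_if_mem[of _ "Q i \<union> I i" "M i"]
    unfolding spans_set_def by blast
qed

lemma valid_pairs_I_Un_R: "valid_pairs M K E (\<lambda>i. I i \<union> R i) S"
proof -
  have "(I i \<union> R i) \<inter> (I j \<union> R j) = {}" if "i \<in> K" "j \<in> K" "i \<noteq> j" for i j
    using valid R_disjoint[OF that] R_subset X_subset_rest_ground rest_ground_Int_I that
    unfolding valid_pairs_def by blast
  then show ?thesis using valid R_subset I_Un_R_indep unfolding valid_pairs_def by blast
qed

lemma extension_I_Un_R: "extension K I S (\<lambda>i. I i \<union> R i) S"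
  using I_subset_S R_subset unfolding extension_def by blast

lemma indep_I_Un_R_Un_Diff:
  assumes C: "\<forall>i\<in>K. I i \<subseteq> C i \<and> C i \<subseteq> S i \<and> indep (M i) (C i)" and X_sub: "X \<subseteq> (\<Union>i\<in>K. C i)"
    and i: "i \<in> K"
  shows "indep (M i) (I i \<union> R i \<union> (C i \<inter> rest_ground K E I - X))"
proof -
  have "\<forall>i\<in>K. C i \<subseteq> S i \<and> indep (M i) (C i \<union> I i)" using C by (simp add: Un_absorb2)
  then have Q: "covering (\<lambda>i. restrict (reduced_matroid M K E I S i) X) K X (\<lambda>i. C i \<inter> X)"
    using covering_restrict_reduced_matroid_Int[OF fam I_indep X_subset_rest_ground _ X_sub] by blast
  show ?thesis
  proof (rule indep_swap_covering[OF Q i])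
    have "indep (M i) (C i)" using C i by blast
    then show "indep (M i) (C i \<inter> X \<union> I i \<union> (C i \<inter> rest_ground K E I - X))"
      by (rule indep_subset[OF M_matroid[OF i]]) (use C i in blast)
    show "(C i \<inter> rest_ground K E I - X) \<inter> (X \<union> I i) = {}" using rest_ground_Int_I[OF i] by blast
  qed
qed

lemma covering_feasible_I_Un_R:
  assumes "covering_feasible M K E I S"
  shows "covering_feasible M K E (\<lambda>i. I i \<union> R i) S"
proof -
  obtain C where C_cov: "covering M K E C" and C_bounds: "\<forall>i\<in>K. I i \<subseteq> C i \<and> C i \<subseteq> S i"
    using assms unfolding covering_feasible_def by blast
  then have C: "\<forall>i\<in>K. I i \<subseteq> C i \<and> C i \<subseteq> S i \<and> indep (M i) (C i)" and C_Union: "(\<Union>i\<in>K. C i) = E"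
    unfolding covering_def by blast+
  let ?G = "rest_ground K E I"
  define C' where "C' i = I i \<union> R i \<union> (C i \<inter> ?G - X)" for i
  have "?G \<subseteq> E" unfolding rest_ground_def by blast
  then have X_sub: "X \<subseteq> (\<Union>i\<in>K. C i)" using C_Union X_subset_rest_ground by blast
  have "indep (M i) (C' i)" if "i \<in> K" for i
    unfolding C'_def by (rule indep_I_Un_R_Un_Diff[OF C X_sub that])
  moreover have C'_bounds: "I i \<union> R i \<subseteq> C' i \<and> C' i \<subseteq> S i" if "i \<in> K" for i
    unfolding C'_def using R_subset[OF that] C_bounds that by blast
  moreover have "(\<Union>i\<in>K. C' i) = E"
  proof
    show "(\<Union>i\<in>K. C' i) \<subseteq> E" using C'_bounds S_subset_E by blast
    have "?G - X \<subseteq> (\<Union>i\<in>K. C' i)" using \<open>?G \<subseteq> E\<close> C_Union unfolding C'_def by blast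
    moreover have "X \<subseteq> (\<Union>i\<in>K. C' i)" using R_Union unfolding C'_def by blast
    moreover have "(\<Union>i\<in>K. I i) \<subseteq> (\<Union>i\<in>K. C' i)" unfolding C'_def by blast
    moreover have "E \<subseteq> (\<Union>i\<in>K. I i) \<union> X \<union> (?G - X)" unfolding rest_ground_def by blast
    ultimately show "E \<subseteq> (\<Union>i\<in>K. C' i)" by (meson Un_least order.trans)
  qed
  ultimately have "covering M K E C'" unfolding covering_def by blast
  then show ?thesis unfolding covering_feasible_def using C'_bounds by blast
qed

lemma spanning_I_Un_R_Un_Diff:
  assumes i: "i \<in> K" and P: "spanning (M i) P" "P \<subseteq> S i"
  shows "spanning (M i) (I i \<union> R i \<union> (P - X))"
proof -
  have P'_ground: "I i \<union> R i \<union> (P - X) \<subseteq> ground (M i)"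
    using I_subset_S[OF i] R_subset[OF i] P(2) S_subset_E[OF i] matroid_familyD(2)[OF fam i] by blast
  have "spans (M i) (I i \<union> R i \<union> (P - X)) y" if y: "y \<in> P" for y
  proof (cases "y \<in> X")
    case True
    then have "spans (M i) (I i \<union> R i) y" using spans_set_I_Un_R[OF i] y P(2) unfolding spans_set_def by blast
    then show ?thesis by (rule spans_mono) blast
  next
    case False
    then show ?thesis using y by (intro spans_if_mem) blast
  qed
  then have "spans_set (M i) (I i \<union> R i \<union> (P - X)) P" unfolding spans_set_def by blast
  moreover have "spans_set (M i) P (ground (M i))" using P(1) unfolding spanning_def by blast
  ultimately have "spans_set (M i) (I i \<union> R i \<union> (P - X)) (ground (M i))"
    using spans_trans[OF M_matroid[OF i] P'_ground] unfolding spans_set_def by blast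
  then show ?thesis using P'_ground unfolding spanning_def by blast
qed

lemma packing_feasible_I_Un_R:
  assumes "packing_feasible M K E I S"
  shows "packing_feasible M K E (\<lambda>i. I i \<union> R i) S"
proof -
  obtain P where P: "packing M K E P" and P_bounds: "\<forall>i\<in>K. I i \<subseteq> P i \<and> P i \<subseteq> S i"
    using assms unfolding packing_feasible_def by blast
  define P' where "P' i = I i \<union> R i \<union> (P i - X)" for i
  have P'_bounds: "I i \<union> R i \<subseteq> P' i \<and> P' i \<subseteq> S i" if "i \<in> K" for i
    unfolding P'_def using R_subset P_bounds that by blast
  have "P' i \<inter> P' j = {}" if ij: "i \<in> K" "j \<in> K" "i \<noteq> j" for i j
  proof -
    have "(I i \<union> R i) \<inter> (I j \<union> R j) = {}" using valid_pairs_I_Un_R ij unfolding valid_pairs_def by blast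
    moreover have "P i \<inter> P j = {}" using P ij unfolding packing_def by blast
    moreover have "I i \<subseteq> P i" "I j \<subseteq> P j" using P_bounds ij(1,2) by blast+
    ultimately show ?thesis unfolding P'_def using R_subset[OF ij(1)] R_subset[OF ij(2)] by blast
  qed
  moreover have "spanning (M i) (P' i)" if i: "i \<in> K" for i
    unfolding P'_def using spanning_I_Un_R_Un_Diff[OF i] P P_bounds i unfolding packing_def by blast
  ultimately have "packing M K E P'" unfolding packing_def by blast
  then show ?thesis unfolding packing_feasible_def using P'_bounds by blast
qed

lemma rest_ground_I_Un_R: "rest_ground K E (\<lambda>i. I i \<union> R i) = rest_ground K E I - X"
proof -
  have "(\<Union>i\<in>K. I i \<union> R i) = (\<Union>i\<in>K. I i) \<union> X" using R_Union by (simp add: UN_Un_distrib)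
  then show ?thesis unfolding rest_ground_def by blast
qed

lemma covering_I_Un_R_Int:
  assumes Z_ground: "Z \<subseteq> rest_ground K E (\<lambda>i. I i \<union> R i)"
    and D: "covering (\<lambda>i. restrict (reduced_matroid M K E I S i) (X \<union> Z)) K (X \<union> Z) D"
  shows "covering (\<lambda>i. restrict (reduced_matroid M K E (\<lambda>i. I i \<union> R i) S i) Z) K Z (\<lambda>i. D i \<inter> Z)"
proof -
  have Z_sub: "Z \<subseteq> rest_ground K E I - X" using Z_ground unfolding rest_ground_I_Un_R .
  then have XZ_sub: "X \<union> Z \<subseteq> rest_ground K E I" using X_subset_rest_ground by blast
  have D_bounds: "\<forall>j\<in>K. D j \<subseteq> S j \<and> indep (M j) (D j \<union> I j)" and D_Union: "(\<Union>j\<in>K. D j) = X \<union> Z"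
    using D unfolding covering_restrict_reduced_matroid[OF fam I_indep XZ_sub] by blast+
  have DX: "covering (\<lambda>j. restrict (reduced_matroid M K E I S j) X) K X (\<lambda>j. D j \<inter> X)"
    using covering_restrict_reduced_matroid_Int[OF fam I_indep X_subset_rest_ground D_bounds] D_Union
    by blast
  show ?thesis
    unfolding covering_restrict_reduced_matroid[OF fam I_Un_R_indep Z_ground]
  proof (intro conjI ballI)
    fix j assume j: "j \<in> K"
    show "D j \<inter> Z \<subseteq> Z \<inter> S j" using D_bounds j by blast
    have "indep (M j) (I j \<union> R j \<union> (D j \<inter> Z))"
    proof (rule indep_swap_covering[OF DX j])
      have "indep (M j) (D j \<union> I j)" using D_bounds j by blast
      then show "indep (M j) (D j \<inter> X \<union> I j \<union> D j \<inter> Z)" by (rule indep_subset[OF M_matroid[OF j]]) blast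
      show "D j \<inter> Z \<inter> (X \<union> I j) = {}" using Z_sub rest_ground_Int_I[OF j] by blast
    qed
    then show "indep (M j) (D j \<inter> Z \<union> (I j \<union> R j))" by (simp add: ac_simps)
  qed (use D_Union Z_sub in blast)
qed

lemma spans_set_covering_Un:
  assumes Z: "tight_set (reduced_matroid M K E (\<lambda>i. I i \<union> R i) S) K (rest_ground K E (\<lambda>i. I i \<union> R i)) Z"
    and D: "covering (\<lambda>i. restrict (reduced_matroid M K E I S i) (X \<union> Z)) K (X \<union> Z) D"
    and i: "i \<in> K"
  shows "spans_set (M i) (D i \<union> I i) ((X \<union> Z) \<inter> S i)"
proof -
  have Z_ground: "Z \<subseteq> rest_ground K E (\<lambda>i. I i \<union> R i)" using Z unfolding tight_set_def by blast
  then have XZ_sub: "X \<union> Z \<subseteq> rest_ground K E I"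
    using X_subset_rest_ground unfolding rest_ground_I_Un_R by blast
  have D_bounds: "\<forall>j\<in>K. D j \<subseteq> S j \<and> indep (M j) (D j \<union> I j)" and D_Union: "(\<Union>j\<in>K. D j) = X \<union> Z"
    using D unfolding covering_restrict_reduced_matroid[OF fam I_indep XZ_sub] by blast+
  have "covering (\<lambda>j. restrict (reduced_matroid M K E I S j) X) K X (\<lambda>j. D j \<inter> X)"
    using covering_restrict_reduced_matroid_Int[OF fam I_indep X_subset_rest_ground D_bounds] D_Union
    by blast
  then have spans_X: "spans_set (M i) (D i \<union> I i) (X \<inter> S i)"
    using spans_set_covering[OF _ i] spans_mono[of "M i" "D i \<inter> X \<union> I i" _ "D i \<union> I i"]
    unfolding spans_set_def by blast
  have spans_Z: "spans_set (M i) (D i \<inter> Z \<union> (I i \<union> R i)) (Z \<inter> S i)"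
    using Z[unfolded tight_set_reduced_matroid_iff[OF fam I_Un_R_indep]] covering_I_Un_R_Int[OF Z_ground D] i
    by blast
  have "spans_set (M i) (D i \<union> I i) (D i \<inter> Z \<union> (I i \<union> R i))"
    using spans_X R_subset[OF i] spans_if_mem[of _ "D i \<union> I i" "M i"]
    unfolding spans_set_def by blast
  moreover have "D i \<union> I i \<subseteq> ground (M i)"
    using indep_subset_ground[OF M_matroid[OF i]] D_bounds i by blast
  ultimately have "spans_set (M i) (D i \<union> I i) (Z \<inter> S i)"
    using spans_Z spans_trans[OF M_matroid[OF i]] unfolding spans_set_def by blast
  then show ?thesis using spans_X unfolding spans_set_def by blast
qed

lemma tight_set_Un:
  assumes Z: "tight_set (reduced_matroid M K E (\<lambda>i. I i \<union> R i) S) K (rest_ground K E (\<lambda>i. I i \<union> R i)) Z"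
  shows "tight_set (reduced_matroid M K E I S) K (rest_ground K E I) (X \<union> Z)"
proof -
  have Z_ground: "Z \<subseteq> rest_ground K E (\<lambda>i. I i \<union> R i)" using Z unfolding tight_set_def by blast
  then have XZ_sub: "X \<union> Z \<subseteq> rest_ground K E I"
    using X_subset_rest_ground unfolding rest_ground_I_Un_R by blast
  obtain C where C: "covering (\<lambda>i. restrict (reduced_matroid M K E (\<lambda>i. I i \<union> R i) S i) Z) K Z C"
    using Z unfolding tight_set_def tight_family_def by blast
  have "covering (\<lambda>i. restrict (reduced_matroid M K E I S i) (X \<union> Z)) K (X \<union> Z) (\<lambda>i. R i \<union> C i)"
    using cov C R_Union
    unfolding covering_restrict_reduced_matroid[OF fam I_indep XZ_sub]
      covering_restrict_reduced_matroid[OF fam I_indep X_subset_rest_ground]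
      covering_restrict_reduced_matroid[OF fam I_Un_R_indep Z_ground]
    by (auto simp: ac_simps)
  then show ?thesis
    unfolding tight_set_reduced_matroid_iff[OF fam I_indep]
    using XZ_sub spans_set_covering_Un[OF Z] by blast
qed

lemma tight_set_I_Un_R_empty:
  assumes X_max: "\<forall>Y. tight_set (reduced_matroid M K E I S) K (rest_ground K E I) Y \<longrightarrow> Y \<subseteq> X"
    and Z: "tight_set (reduced_matroid M K E (\<lambda>i. I i \<union> R i) S) K (rest_ground K E (\<lambda>i. I i \<union> R i)) Z"
  shows "Z = {}"
proof -
  have "Z \<subseteq> X" using X_max tight_set_Un[OF Z] by blast
  moreover have "Z \<inter> X = {}" using Z unfolding tight_set_def rest_ground_I_Un_R by blast
  ultimately show ?thesis by blast
qed

end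

theorem lemma3p11:
  fixes M :: "'k \<Rightarrow> 'a matroid" and K :: "'k set" and E :: "'a set"
    and I S R :: "'k \<Rightarrow> 'a set" and X :: "'a set"
  assumes fam: "matroid_family M K E"
    and F: "valid_pairs M K E I S"
    and feas: "feasible M K E I S"
    and tight: "tight_set (reduced_matroid M K E I S) K (rest_ground K E I) X"
    and cov: "covering (\<lambda>i. restrict (reduced_matroid M K E I S i) X) K X R"
  shows "valid_pairs M K E (\<lambda>i. I i \<union> R i) S
       \<and> extension K I S (\<lambda>i. I i \<union> R i) S
       \<and> feasible M K E (\<lambda>i. I i \<union> R i) S
       \<and> (\<forall>i \<in> K. spans_set (M i) (I i \<union> R i) (X \<inter> S i))
       \<and> ((\<forall>Y. tight_set (reduced_matroid M K E I S) K (rest_ground K E I) Y \<longrightarrow> Y \<subseteq> X)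
           \<longrightarrow> (\<forall>Z. tight_set (reduced_matroid M K E (\<lambda>i. I i \<union> R i) S) K
                        (rest_ground K E (\<lambda>i. I i \<union> R i)) Z \<longrightarrow> Z = {}))"
proof -
  interpret covered_tight_set M K E I S R X
    using fam F tight cov by unfold_locales
  show ?thesis
    using valid_pairs_I_Un_R extension_I_Un_R feas covering_feasible_I_Un_R packing_feasible_I_Un_R
      spans_set_I_Un_R tight_set_I_Un_R_empty
    unfolding feasible_def by blast
qed

end
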